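(* Let $n \ge d \ge 1$ and $K\ge 1$. Let $A_+^1,\ldots,A_+^K$ be $n\times n$ real symmetric positive semi-definite matrices and let $\Lambda^1,\ldots,\Lambda^K\in\Delta_+^d$. Let $U^{\mathrm{old}} \in \mathbb{R}^{n\times d}$ satisfy $(U^{\mathrm{old}})^T U^{\mathrm{old}} = I_d$. Let $M = \sum_{k=1}^K A_+^k U^{\mathrm{old}}\Lambda^k \in \mathbb{R}^{n\times d}$ and let $M = B\Sigma C^T$ be a (thin) singular value decomposition, with $B\in\mathbb{R}^{n\times d}$ having orthonormal columns (left singular vectors), $C\in\mathbb{R}^{d\times d}$ orthogonal (right singular vectors), and $\Sigma$ diagonal with nonnegative entries. Set $U^{\mathrm{new}} \equiv BC^T$. Then $(U^{\mathrm{new}})^TU^{\mathrm{new}} = I_d$ and $$\sum_{k=1}^K \left\| A_+^k - U^{\mathrm{new}}\Lambda^k (U^{\mathrm{new}})^T\right\|_F^2 \le \sum_{k=1}^K \left\| A_+^k - U^{\mathrm{old}}\Lambda^k (U^{\mathrm{old}})^T\right\|_F^2.$$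
   Context: $\Delta_+^d$ denotes the set of $d\times d$ real diagonal matrices whose diagonal entries are all nonnegative. $\|\cdot\|_F$ is the Frobenius norm. In the paper, each $A_+^k$ is the positive semi-definite part of a symmetric adjacency matrix $A^k$: if $A^k = VDV^T$ is an eigendecomposition, then $A_+^k = V D_+ V^T$ with $(D_+)_{ii}=\max(D_{ii},0)$. *)

theory Defs
  imports "HOL-Analysis.Analysis"
begin

definition frob_norm :: "real^'n^'m \<Rightarrow> real" where
  "frob_norm A = sqrt (\<Sum>i\<in>UNIV. \<Sum>j\<in>UNIV. (A $ i $ j)^2)"

definition psd :: "real^'n^'n \<Rightarrow> bool" where
  "psd A \<longleftrightarrow> transpose A = A \<and> (\<forall>x. 0 \<le> x \<bullet> (A *v x))"

text \<open>Diagonal matrix with nonnegative diagonal entries (the set Delta_+^d).\<close>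
definition nonneg_diag :: "real^'d^'d \<Rightarrow> bool" where
  "nonneg_diag L \<longleftrightarrow> (\<forall>i j. i \<noteq> j \<longrightarrow> L $ i $ j = 0) \<and> (\<forall>i. 0 \<le> L $ i $ i)"

end

theory Submission
  imports Defs
begin

text \<open>For U with orthonormal columns, |A - U L U^T|_F^2 = tr(A^2) + tr(L^2) - 2 tr(U^T A U L),
  so the objective decreases as soon as g(U) = sum_k tr(U^T A_k U L_k) increases. Since A_k is
  PSD and L_k is a nonnegative diagonal matrix, g is convex, so it lies above its linearisation
  at Uold: g(Unew) >= g(Uold) + 2 tr((Unew - Uold)^T M). The linear term is nonnegative because
  tr(Unew^T M) = tr Sigma, while for every U with orthonormal columns
  tr(U^T B Sigma C^T) = sum_j (C^T U^T B)_jj Sigma_jj <= tr Sigma: the diagonal entries of the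
  product of two matrices with orthonormal columns are at most 1.\<close>

lemma matrix_add_rdistrib: "((A::'a::semiring_1^'n^'m) + B) ** C = A ** C + B ** C"
  by (vector matrix_matrix_mult_def sum.distrib[symmetric] field_simps)

lemma matrix_diff_rdistrib: "((A::'a::ring_1^'n^'m) - B) ** C = A ** C - B ** C"
  by (vector matrix_matrix_mult_def sum_subtractf[symmetric] field_simps)

lemma matrix_diff_ldistrib: "(A::'a::ring_1^'n^'m) ** (B - C) = A ** B - A ** C"
  by (vector matrix_matrix_mult_def sum_subtractf[symmetric] field_simps)

lemma matrix_sum_ldistrib:
  "finite S \<Longrightarrow> (X::'a::semiring_1^'n^'m) ** sum f S = (\<Sum>s\<in>S. X ** f s)"
  by (induction S rule: finite_induct) (simp_all add: matrix_add_ldistrib)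

lemma transpose_add: "transpose (A + B) = transpose A + transpose (B::'a::plus^'n^'m)"
  by (vector transpose_def)

lemma transpose_diff: "transpose (A - B) = transpose A - transpose (B::'a::minus^'n^'m)"
  by (vector transpose_def)

lemma trace_transpose: "trace (transpose A) = trace (A::'a::semiring_1^'n^'n)"
  by (simp add: trace_def transpose_def)

lemma trace_sum: "finite S \<Longrightarrow> trace (sum f S) = (\<Sum>s\<in>S. trace (f s :: 'a::comm_semiring_1^'n^'n))"
  by (induction S rule: finite_induct) (simp_all add: trace_0[simplified] trace_add)

lemma trace_mult_diagonal:
  assumes "\<And>i j. i \<noteq> j \<Longrightarrow> S $ i $ j = 0"
  shows "trace (W ** S) = (\<Sum>j\<in>UNIV. W $ j $ j * S $ j $ (j::'d::finite) :: 'a::semiring_1)"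
proof -
  have "(\<Sum>i\<in>UNIV. W $ j $ i * S $ i $ j) = W $ j $ j * S $ j $ j" for j
    using assms by (subst sum.remove[of _ j]) auto
  then show ?thesis by (simp add: trace_def matrix_matrix_mult_def)
qed

lemma frob_norm_sq_eq_trace: "(frob_norm X)\<^sup>2 = trace (transpose X ** X)"
proof -
  have "(frob_norm X)\<^sup>2 = (\<Sum>i\<in>UNIV. \<Sum>j\<in>UNIV. (X $ i $ j)\<^sup>2)"
    unfolding frob_norm_def by (simp add: sum_nonneg)
  also have "\<dots> = (\<Sum>j\<in>UNIV. \<Sum>i\<in>UNIV. X $ i $ j * X $ i $ j)"
    by (subst sum.swap) (simp add: power2_eq_square)
  also have "\<dots> = trace (transpose X ** X)"
    by (simp add: trace_def matrix_matrix_mult_def transpose_def)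
  finally show ?thesis .
qed

lemma nonneg_diag_transpose: "nonneg_diag L \<Longrightarrow> transpose L = L"
  unfolding nonneg_diag_def transpose_def by (vector, metis)

lemma diag_congruence_eq_quadratic_form:
  "(transpose D ** A ** D) $ j $ j = column j D \<bullet> (A *v column j (D::real^'d^'n))"
  by (simp add: matrix_matrix_mult_def transpose_def column_def inner_vec_def
      matrix_vector_mult_def sum_distrib_left sum_distrib_right mult_ac)
     (subst sum.swap, simp add: mult_ac)

lemma trace_psd_congruence_nonneg_diag:
  fixes D :: "real^'d^'n"
  assumes "psd A" and "nonneg_diag L"
  shows "0 \<le> trace (transpose D ** A ** D ** L)"
proof -
  have "trace (transpose D ** A ** D ** L) = (\<Sum>j\<in>UNIV. (transpose D ** A ** D) $ j $ j * L $ j $ j)"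
    using assms(2) by (intro trace_mult_diagonal) (simp add: nonneg_diag_def)
  also have "\<dots> \<ge> 0"
    using assms unfolding diag_congruence_eq_quadratic_form psd_def nonneg_diag_def
    by (intro sum_nonneg mult_nonneg_nonneg) auto
  finally show ?thesis .
qed

lemma orthonormal_columns_diag_product_le_one:
  fixes P Q :: "real^'d^'n"
  assumes "transpose P ** P = mat 1" and "transpose Q ** Q = mat 1"
  shows "(transpose P ** Q) $ j $ j \<le> 1"
proof -
  have "(transpose P ** Q) $ j $ j = (\<Sum>r\<in>UNIV. P $ r $ j * Q $ r $ j)"
    by (simp add: matrix_matrix_mult_def transpose_def)
  also have "\<dots> \<le> (\<Sum>r\<in>UNIV. (P $ r $ j * P $ r $ j + Q $ r $ j * Q $ r $ j) / 2)"
  proof (rule sum_mono)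
    fix r
    have "0 \<le> (P $ r $ j - Q $ r $ j)\<^sup>2" by simp
    then show "P $ r $ j * Q $ r $ j \<le> (P $ r $ j * P $ r $ j + Q $ r $ j * Q $ r $ j) / 2"
      by (simp add: power2_eq_square algebra_simps)
  qed
  also have "\<dots> = ((transpose P ** P) $ j $ j + (transpose Q ** Q) $ j $ j) / 2"
    by (simp add: matrix_matrix_mult_def transpose_def sum.distrib[symmetric]
        sum_divide_distrib[symmetric])
  also have "\<dots> = 1" using assms by (simp add: mat_def)
  finally show ?thesis .
qed

lemma orthonormal_columns_mult_orthogonal:
  fixes B :: "real^'d^'n"
  assumes "transpose B ** B = mat 1" and "orthogonal_matrix C"
  shows "transpose (B ** C) ** (B ** C) = mat 1"
proof -
  have "transpose (B ** C) ** (B ** C) = transpose C ** (transpose B ** B) ** C"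
    by (simp add: matrix_transpose_mul matrix_mul_assoc)
  then show ?thesis using assms by (simp add: orthogonal_matrix_def)
qed

lemma trace_orthonormal_columns_mult_svd_le:
  fixes U B :: "real^'d^'n"
  assumes U: "transpose U ** U = mat 1" and B: "transpose B ** B = mat 1"
    and C: "orthogonal_matrix C" and S: "nonneg_diag S"
  shows "trace (transpose U ** (B ** S ** transpose C)) \<le> trace S"
proof -
  define P where "P = U ** C"
  have P: "transpose P ** P = mat 1"
    unfolding P_def using orthonormal_columns_mult_orthogonal[OF U C] .
  have "trace (transpose U ** (B ** S ** transpose C)) = trace (transpose C ** (transpose U ** B ** S))"
    by (metis trace_mul_sym matrix_mul_assoc)
  also have "\<dots> = trace ((transpose P ** B) ** S)"
    unfolding P_def by (simp add: matrix_transpose_mul matrix_mul_assoc)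
  also have "\<dots> = (\<Sum>j\<in>UNIV. (transpose P ** B) $ j $ j * S $ j $ j)"
    using S by (intro trace_mult_diagonal) (simp add: nonneg_diag_def)
  also have "\<dots> \<le> (\<Sum>j\<in>UNIV. S $ j $ j)"
    using orthonormal_columns_diag_product_le_one[OF P B] S
    by (intro sum_mono) (metis mult.commute mult_left_le nonneg_diag_def)
  also have "\<dots> = trace S" by (simp add: trace_def)
  finally show ?thesis .
qed

lemma trace_polar_factor_mult_svd:
  fixes B :: "real^'d^'n"
  assumes B: "transpose B ** B = mat 1" and C: "orthogonal_matrix C"
  shows "trace (transpose (B ** transpose C) ** (B ** S ** transpose C)) = trace S"
proof -
  have "transpose (B ** transpose C) ** (B ** S ** transpose C) = C ** (transpose B ** B) ** S ** transpose C"
    by (simp add: matrix_transpose_mul matrix_mul_assoc)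
  also have "\<dots> = C ** (S ** transpose C)" by (simp add: B matrix_mul_assoc)
  finally show ?thesis
    using C by (metis trace_mul_sym matrix_mul_assoc matrix_mul_lid orthogonal_matrix_def)
qed

lemma frob_norm_sq_diff_congruence:
  fixes U :: "real^'d^'n"
  assumes A: "transpose A = A" and L: "nonneg_diag L" and U: "transpose U ** U = mat 1"
  shows "(frob_norm (A - U ** L ** transpose U))\<^sup>2
     = trace (A ** A) + trace (L ** L) - 2 * trace (transpose U ** A ** U ** L)"
proof -
  define P where "P = U ** L ** transpose U"
  have P: "transpose P = P"
    unfolding P_def by (simp add: matrix_transpose_mul nonneg_diag_transpose[OF L] matrix_mul_assoc)
  have AP: "trace (A ** P) = trace (transpose U ** A ** U ** L)"
    unfolding P_def by (metis trace_mul_sym matrix_mul_assoc)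
  have "P ** P = (U ** L ** L) ** transpose U"
    unfolding P_def by (simp add: matrix_mul_assoc[symmetric]) (simp add: matrix_mul_assoc U)
  then have PP: "trace (P ** P) = trace (L ** L)"
    by (metis trace_mul_sym matrix_mul_assoc matrix_mul_lid U)
  have "(frob_norm (A - P))\<^sup>2 = trace (A ** A) - trace (A ** P) - trace (P ** A) + trace (P ** P)"
    by (simp add: frob_norm_sq_eq_trace transpose_diff A P matrix_diff_rdistrib
        matrix_diff_ldistrib trace_sub)
  then show ?thesis
    unfolding P_def[symmetric] using AP PP trace_mul_sym[of P A] by simp
qed

lemma trace_congruence_add:
  fixes V D :: "real^'d^'n"
  assumes A: "transpose A = A" and L: "nonneg_diag L"
  shows "trace (transpose (V + D) ** A ** (V + D) ** L)
     = trace (transpose V ** A ** V ** L) + 2 * trace (transpose D ** (A ** V ** L))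
       + trace (transpose D ** A ** D ** L)"
proof -
  have "trace (transpose V ** A ** D ** L) = trace (transpose (transpose V ** A ** D ** L))"
    by (simp add: trace_transpose)
  also have "\<dots> = trace (L ** (transpose D ** A ** V))"
    by (simp add: matrix_transpose_mul nonneg_diag_transpose[OF L] A matrix_mul_assoc)
  also have "\<dots> = trace (transpose D ** (A ** V ** L))"
    by (metis trace_mul_sym matrix_mul_assoc)
  finally have cross: "trace (transpose V ** A ** D ** L) = trace (transpose D ** (A ** V ** L))" .
  show ?thesis
    by (simp add: transpose_add matrix_add_rdistrib matrix_add_ldistrib trace_add cross
        matrix_mul_assoc)
qed

lemma trace_congruence_ge_linearization:
  fixes V W :: "real^'d^'n"
  assumes A: "psd A" and L: "nonneg_diag L"
  shows "trace (transpose V ** A ** V ** L) + 2 * trace (transpose (W - V) ** (A ** V ** L))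
     \<le> trace (transpose W ** A ** W ** L)"
proof -
  have "transpose A = A" using A by (simp add: psd_def)
  from trace_congruence_add[OF this L, of V "W - V"]
  have "trace (transpose W ** A ** W ** L)
      = trace (transpose V ** A ** V ** L) + 2 * trace (transpose (W - V) ** (A ** V ** L))
        + trace (transpose (W - V) ** A ** (W - V) ** L)"
    by simp
  with trace_psd_congruence_nonneg_diag[OF A L, of "W - V"] show ?thesis by linarith
qed

lemma sum_frob_norm_sq_diff_congruence:
  fixes U :: "real^'d^'n"
  assumes "\<forall>k\<in>S. psd (A k)" and "\<forall>k\<in>S. nonneg_diag (L k)" and "transpose U ** U = mat 1"
  shows "(\<Sum>k\<in>S. (frob_norm (A k - U ** L k ** transpose U))\<^sup>2)
     = (\<Sum>k\<in>S. trace (A k ** A k) + trace (L k ** L k))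
       - 2 * (\<Sum>k\<in>S. trace (transpose U ** A k ** U ** L k))"
proof -
  have "(frob_norm (A k - U ** L k ** transpose U))\<^sup>2
      = trace (A k ** A k) + trace (L k ** L k) - 2 * trace (transpose U ** A k ** U ** L k)"
    if "k \<in> S" for k
    using assms that by (intro frob_norm_sq_diff_congruence) (auto simp: psd_def)
  then show ?thesis by (simp add: sum_subtractf sum_distrib_left)
qed

theorem proposition2:
  fixes K :: nat
    and A :: "nat \<Rightarrow> real^'n^'n"
    and Lam :: "nat \<Rightarrow> real^'d^'d"
    and Uold B :: "real^'d^'n"
    and C Sigma :: "real^'d^'d"
  assumes "CARD('d) \<le> CARD('n)"
    and "K \<ge> 1"
    and "\<forall>k\<in>{1..K}. psd (A k)"
    and "\<forall>k\<in>{1..K}. nonneg_diag (Lam k)"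
    and "transpose Uold ** Uold = mat 1"
    and "transpose B ** B = mat 1"
    and "orthogonal_matrix C"
    and "nonneg_diag Sigma"
    and "(\<Sum>k=1..K. A k ** Uold ** Lam k) = B ** Sigma ** transpose C"
  shows "transpose (B ** transpose C) ** (B ** transpose C) = mat 1 \<and>
         (\<Sum>k=1..K. (frob_norm (A k - (B ** transpose C) ** Lam k ** transpose (B ** transpose C)))^2)
           \<le> (\<Sum>k=1..K. (frob_norm (A k - Uold ** Lam k ** transpose Uold))^2)"
proof -
  let ?U = "B ** transpose C"
  define M where "M = (\<Sum>k=1..K. A k ** Uold ** Lam k)"
  have orth: "transpose ?U ** ?U = mat 1"
    using orthonormal_columns_mult_orthogonal assms(6,7) orthogonal_matrix_transpose by blast
  have "trace (transpose Uold ** M) \<le> trace (transpose ?U ** M)"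
    unfolding M_def assms(9)
    using trace_orthonormal_columns_mult_svd_le[OF assms(5-8)] trace_polar_factor_mult_svd[OF assms(6,7)]
    by simp
  then have gain: "0 \<le> (\<Sum>k=1..K. trace (transpose (?U - Uold) ** (A k ** Uold ** Lam k)))"
    by (simp add: M_def matrix_sum_ldistrib trace_sum transpose_diff matrix_diff_rdistrib
        trace_sub matrix_mul_assoc sum_subtractf)
  have "(\<Sum>k=1..K. trace (transpose Uold ** A k ** Uold ** Lam k))
      + 2 * (\<Sum>k=1..K. trace (transpose (?U - Uold) ** (A k ** Uold ** Lam k)))
      \<le> (\<Sum>k=1..K. trace (transpose ?U ** A k ** ?U ** Lam k))"
    unfolding sum_distrib_left sum.distrib[symmetric]
    using assms(3,4) by (intro sum_mono trace_congruence_ge_linearization) auto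
  with gain orth show ?thesis
    by (simp add: sum_frob_norm_sq_diff_congruence assms(3-5))
qed

end
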